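(* Let $D$ be a nonempty set and $\epsilon\subseteq D\times D$ a binary relation (write $\epsilon ab$ for $(a,b)\in\epsilon$) such that for all $a,b,c\in D$: $\epsilon ab\Rightarrow\epsilon aa$; $\epsilon ab\wedge\epsilon bc\Rightarrow\epsilon ac$; $\epsilon ab\wedge\epsilon bb\Rightarrow\epsilon ba$. Then $(D,\epsilon)$ satisfies, for all $a,b\in D$, $$\epsilon ab\iff\big(\exists x\in D\,(\epsilon xa\wedge\epsilon xb)\big)\wedge\big(\forall x,y\in D\,(\epsilon xa\wedge\epsilon ya\Rightarrow\epsilon xy)\big)$$ if and only if $D$ contains no singular name.
   Context: A model for $\mathbf{L_1}$ is a pair $(D,\epsilon)$ as in the hypothesis; it is a model for Leśniewski's ontology $\mathbf{L}$ if it satisfies the displayed equivalence (the axiom of $\mathbf{L}$) for all $a,b\in D$. An element $a\in D$ is an atom if $\epsilon aa$. An element $b\in D$ is a singular name if $b$ is not an atom (not $\epsilon bb$), there exists $a\in D$ with $\epsilon ab$, and for all $x,y\in D$, $\epsilon xb\wedge\epsilon yb$ implies $\epsilon xy$. *)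

theory Defs
  imports Main
begin

definition L1_model :: "'a set \<Rightarrow> ('a \<Rightarrow> 'a \<Rightarrow> bool) \<Rightarrow> bool" where
  "L1_model D eps \<longleftrightarrow> D \<noteq> {} \<and>
     (\<forall>a\<in>D. \<forall>b\<in>D. eps a b \<longrightarrow> eps a a) \<and>
     (\<forall>a\<in>D. \<forall>b\<in>D. \<forall>c\<in>D. eps a b \<and> eps b c \<longrightarrow> eps a c) \<and>
     (\<forall>a\<in>D. \<forall>b\<in>D. eps a b \<and> eps b b \<longrightarrow> eps b a)"

definition L_model :: "'a set \<Rightarrow> ('a \<Rightarrow> 'a \<Rightarrow> bool) \<Rightarrow> bool" where
  "L_model D eps \<longleftrightarrow> (\<forall>a\<in>D. \<forall>b\<in>D.
     eps a b \<longleftrightarrow> ((\<exists>x\<in>D. eps x a \<and> eps x b) \<and>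
                    (\<forall>x\<in>D. \<forall>y\<in>D. eps x a \<and> eps y a \<longrightarrow> eps x y)))"

definition atom :: "('a \<Rightarrow> 'a \<Rightarrow> bool) \<Rightarrow> 'a \<Rightarrow> bool" where
  "atom eps a \<longleftrightarrow> eps a a"

definition singular_name :: "'a set \<Rightarrow> ('a \<Rightarrow> 'a \<Rightarrow> bool) \<Rightarrow> 'a \<Rightarrow> bool" where
  "singular_name D eps b \<longleftrightarrow> \<not> atom eps b \<and> (\<exists>a\<in>D. eps a b) \<and>
     (\<forall>x\<in>D. \<forall>y\<in>D. eps x b \<and> eps y b \<longrightarrow> eps x y)"

end

theory Submission
  imports Defs
begin

text \<open>In an L1-model the left-to-right half of the axiom of L always holds: if
  \<open>eps a b\<close> then \<open>a\<close> is an atom, so \<open>a\<close> witnesses the existential, and by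
  symmetry on atoms and transitivity any two elements of \<open>a\<close> are related. The
  right-to-left half can only fail at a non-atom \<open>a\<close> that has an element and
  whose elements are pairwise related, i.e. at a singular name; for an atom \<open>a\<close>
  with a common element \<open>x\<close> of \<open>a\<close> and \<open>b\<close> one gets \<open>eps a x\<close>, hence \<open>eps a b\<close>.
  Conversely, in an L-model the axiom itself, applied to \<open>eps b b\<close>, turns a
  singular name \<open>b\<close> into an atom.\<close>

lemma L1_modelD:
  assumes "L1_model D eps"
  shows L1_model_refl: "\<lbrakk>a \<in> D; b \<in> D; eps a b\<rbrakk> \<Longrightarrow> eps a a"
    and L1_model_trans: "\<lbrakk>a \<in> D; b \<in> D; c \<in> D; eps a b; eps b c\<rbrakk> \<Longrightarrow> eps a c"
    and L1_model_sym_atom: "\<lbrakk>a \<in> D; b \<in> D; eps a b; eps b b\<rbrakk> \<Longrightarrow> eps b a"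
  using assms unfolding L1_model_def by blast+

lemma L1_model_under_atom_related:
  assumes "L1_model D eps" "a \<in> D" "x \<in> D" "y \<in> D"
    and "eps a a" "eps x a" "eps y a"
  shows "eps x y"
proof -
  have "eps a y" using L1_model_sym_atom[OF assms(1,4,2,7,5)] .
  with \<open>eps x a\<close> show ?thesis by (rule L1_model_trans[OF assms(1,3,2,4)])
qed

lemma L1_model_eps_imp_L_rhs:
  assumes "L1_model D eps" "a \<in> D" "b \<in> D" "eps a b"
  shows "(\<exists>x\<in>D. eps x a \<and> eps x b) \<and> (\<forall>x\<in>D. \<forall>y\<in>D. eps x a \<and> eps y a \<longrightarrow> eps x y)"
proof -
  have "eps a a" using L1_model_refl[OF assms] .
  then have "\<forall>x\<in>D. \<forall>y\<in>D. eps x a \<and> eps y a \<longrightarrow> eps x y"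
    using L1_model_under_atom_related[OF assms(1,2)] by blast
  with \<open>eps a a\<close> show ?thesis using assms(2,4) by blast
qed

lemma L1_model_L_rhs_imp_eps:
  assumes "L1_model D eps" "a \<in> D" "b \<in> D"
    and not_singular: "\<not> singular_name D eps a"
    and witness: "x \<in> D" "eps x a" "eps x b"
    and related: "\<forall>x\<in>D. \<forall>y\<in>D. eps x a \<and> eps y a \<longrightarrow> eps x y"
  shows "eps a b"
proof -
  have "eps a a"
    using not_singular witness(1,2) related unfolding singular_name_def atom_def by blast
  with witness have "eps a x" by (intro L1_model_sym_atom[OF assms(1) witness(1) assms(2)])
  then show ?thesis using witness(3) by (rule L1_model_trans[OF assms(1,2) witness(1) assms(3)])
qed

lemma L_model_no_singular_name:
  assumes "L_model D eps" "b \<in> D"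
  shows "\<not> singular_name D eps b"
proof
  assume "singular_name D eps b"
  then have "eps b b"
    using assms unfolding L_model_def singular_name_def by blast
  with \<open>singular_name D eps b\<close> show False
    unfolding singular_name_def atom_def by blast
qed

theorem theorem5p2:
  fixes D :: "'a set" and eps :: "'a \<Rightarrow> 'a \<Rightarrow> bool"
  assumes "L1_model D eps"
  shows "L_model D eps \<longleftrightarrow> \<not> (\<exists>b\<in>D. singular_name D eps b)"
proof
  assume "L_model D eps"
  then show "\<not> (\<exists>b\<in>D. singular_name D eps b)"
    by (auto dest: L_model_no_singular_name)
next
  assume no_singular: "\<not> (\<exists>b\<in>D. singular_name D eps b)"
  show "L_model D eps"
    unfolding L_model_def
  proof (intro ballI iffI)
    fix a b assume a: "a \<in> D" and b: "b \<in> D"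
    show "(\<exists>x\<in>D. eps x a \<and> eps x b) \<and> (\<forall>x\<in>D. \<forall>y\<in>D. eps x a \<and> eps y a \<longrightarrow> eps x y)"
      if "eps a b"
      using L1_model_eps_imp_L_rhs[OF assms a b that] .
    assume rhs: "(\<exists>x\<in>D. eps x a \<and> eps x b) \<and>
        (\<forall>x\<in>D. \<forall>y\<in>D. eps x a \<and> eps y a \<longrightarrow> eps x y)"
    then obtain x where "x \<in> D" "eps x a" "eps x b" by blast
    moreover have "\<not> singular_name D eps a" using no_singular a by blast
    ultimately show "eps a b"
      using L1_model_L_rhs_imp_eps[OF assms a b] rhs by blast
  qed
qed

end
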